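(* Let $F$ be a field with valuation $v:F\to\mathbb{R}\cup\{\infty\}$ whose value group is a proper dense subgroup of $\mathbb{R}$, $R=\{x\in F:v(x)\ge0\}$, $U=\{f\in R[[X]]:v_0(f)=0\}$ and $T=R[[X]]_U$. Then $R[[X]]$ is a pure $R$-submodule of $T$, and more generally for any index set $I$ the direct product $R[[X]]^I$ is a pure $R$-submodule of $T^I$.
   Context: $v_0\big(\sum_n s_nX^n\big)=\inf\{v(s_n):n\in\mathbb{N}\}$ (a valuation on $R[[X]]$). For a commutative ring $S$ and $S$-module $M$, a submodule $N\subseteq M$ is pure if for every $S$-module $L$ the natural map $N\otimes_S L\to M\otimes_S L$ is injective. *)

theory Defs
  imports Complex_Main "HOL-Library.Extended_Real" "HOL-Library.Function_Algebras"
    "HOL-Computational_Algebra.Formal_Laurent_Series"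
begin

definition valuation :: "('a::field \<Rightarrow> ereal) \<Rightarrow> bool" where
  "valuation v \<longleftrightarrow>
     (\<forall>x. v x \<noteq> -\<infinity>) \<and>
     (\<forall>x. v x = \<infinity> \<longleftrightarrow> x = 0) \<and>
     (\<forall>x y. v (x * y) = v x + v y) \<and>
     (\<forall>x y. min (v x) (v y) \<le> v (x + y))"

definition value_group :: "('a::field \<Rightarrow> ereal) \<Rightarrow> real set" where
  "value_group v = {r. \<exists>x. x \<noteq> 0 \<and> v x = ereal r}"

definition dense_in_reals :: "real set \<Rightarrow> bool" where
  "dense_in_reals G \<longleftrightarrow> (\<forall>a b. a < b \<longrightarrow> (\<exists>g\<in>G. a < g \<and> g < b))"

definition val_ring :: "('a::field \<Rightarrow> ereal) \<Rightarrow> 'a set" where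
  "val_ring v = {x. 0 \<le> v x}"

definition val_fps :: "('a::field \<Rightarrow> ereal) \<Rightarrow> 'a fps set" where
  "val_fps v = {f. \<forall>n. fps_nth f n \<in> val_ring v}"

definition v0 :: "('a::field \<Rightarrow> ereal) \<Rightarrow> 'a fps \<Rightarrow> ereal" where
  "v0 v f = (INF n. v (fps_nth f n))"

definition U_set :: "('a::field \<Rightarrow> ereal) \<Rightarrow> 'a fps set" where
  "U_set v = {f \<in> val_fps v. v0 v f = 0}"

text \<open>T = R[[X]]_U, realised inside the fraction field F((X)) of the domain R[[X]] \<subseteq> F[[X]].\<close>
definition T_set :: "('a::field \<Rightarrow> ereal) \<Rightarrow> 'a fls set" where
  "T_set v = {fps_to_fls f / fps_to_fls u | f u. f \<in> val_fps v \<and> u \<in> U_set v}"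

definition RX_set :: "('a::field \<Rightarrow> ereal) \<Rightarrow> 'a fls set" where
  "RX_set v = fps_to_fls ` val_fps v"

definition module_on :: "'a::comm_ring_1 set \<Rightarrow> 'm::ab_group_add set \<Rightarrow> ('a \<Rightarrow> 'm \<Rightarrow> 'm) \<Rightarrow> bool" where
  "module_on R Mc sm \<longleftrightarrow>
     0 \<in> Mc \<and> (\<forall>x\<in>Mc. \<forall>y\<in>Mc. x + y \<in> Mc) \<and> (\<forall>x\<in>Mc. - x \<in> Mc) \<and>
     (\<forall>r\<in>R. \<forall>x\<in>Mc. sm r x \<in> Mc) \<and>
     (\<forall>r\<in>R. \<forall>x\<in>Mc. \<forall>y\<in>Mc. sm r (x + y) = sm r x + sm r y) \<and>
     (\<forall>r\<in>R. \<forall>s\<in>R. \<forall>x\<in>Mc. sm (r + s) x = sm r x + sm s x) \<and>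
     (\<forall>r\<in>R. \<forall>s\<in>R. \<forall>x\<in>Mc. sm (r * s) x = sm r (sm s x)) \<and>
     (\<forall>x\<in>Mc. sm 1 x = x)"

definition submodule_on :: "'a::comm_ring_1 set \<Rightarrow> 'm::ab_group_add set \<Rightarrow> 'm set \<Rightarrow> ('a \<Rightarrow> 'm \<Rightarrow> 'm) \<Rightarrow> bool" where
  "submodule_on R Nc Mc sm \<longleftrightarrow> Nc \<subseteq> Mc \<and> module_on R Mc sm \<and> module_on R Nc sm"

text \<open>Formal Z-linear combinations of pairs: the free abelian group on M x L.\<close>
definition delta :: "'p \<Rightarrow> 'p \<Rightarrow> int" where
  "delta p = (\<lambda>q. if q = p then 1 else 0)"

definition tensor_rels ::
  "'a::comm_ring_1 set \<Rightarrow> 'm::ab_group_add set \<Rightarrow> ('a \<Rightarrow> 'm \<Rightarrow> 'm) \<Rightarrow>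
   'l::ab_group_add set \<Rightarrow> ('a \<Rightarrow> 'l \<Rightarrow> 'l) \<Rightarrow> ('m \<times> 'l \<Rightarrow> int) set" where
  "tensor_rels R Mc sm Lc sl =
     {delta (m + m', l) - delta (m, l) - delta (m', l) | m m' l. m \<in> Mc \<and> m' \<in> Mc \<and> l \<in> Lc} \<union>
     {delta (m, l + l') - delta (m, l) - delta (m, l') | m l l'. m \<in> Mc \<and> l \<in> Lc \<and> l' \<in> Lc} \<union>
     {delta (sm r m, l) - delta (m, sl r l) | r m l. r \<in> R \<and> m \<in> Mc \<and> l \<in> Lc}"

inductive_set zspan :: "'g::ab_group_add set \<Rightarrow> 'g set" for S where
  zspan_zero: "0 \<in> zspan S"
| zspan_gen: "s \<in> S \<Longrightarrow> s \<in> zspan S"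
| zspan_diff: "a \<in> zspan S \<Longrightarrow> b \<in> zspan S \<Longrightarrow> a - b \<in> zspan S"

text \<open>The element sum of m_i \<otimes> l_i (for the list xs of pairs (m_i,l_i)) is zero in M \<otimes>_R L.\<close>
definition tensor_zero ::
  "'a::comm_ring_1 set \<Rightarrow> 'm::ab_group_add set \<Rightarrow> ('a \<Rightarrow> 'm \<Rightarrow> 'm) \<Rightarrow>
   'l::ab_group_add set \<Rightarrow> ('a \<Rightarrow> 'l \<Rightarrow> 'l) \<Rightarrow> ('m \<times> 'l) list \<Rightarrow> bool" where
  "tensor_zero R Mc sm Lc sl xs \<longleftrightarrow>
     (\<Sum>p\<leftarrow>xs. delta p) \<in> zspan (tensor_rels R Mc sm Lc sl)"

text \<open>The natural map N \<otimes>_R L \<rightarrow> M \<otimes>_R L is injective: every element of N \<otimes> L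
  (a finite sum of simple tensors) that vanishes in M \<otimes> L already vanishes in N \<otimes> L.\<close>
definition tensor_map_injective ::
  "'a::comm_ring_1 set \<Rightarrow> 'm::ab_group_add set \<Rightarrow> 'm set \<Rightarrow> ('a \<Rightarrow> 'm \<Rightarrow> 'm) \<Rightarrow>
   'l::ab_group_add set \<Rightarrow> ('a \<Rightarrow> 'l \<Rightarrow> 'l) \<Rightarrow> bool" where
  "tensor_map_injective R Nc Mc sm Lc sl \<longleftrightarrow>
     (\<forall>xs. set xs \<subseteq> Nc \<times> Lc \<longrightarrow> tensor_zero R Mc sm Lc sl xs \<longrightarrow> tensor_zero R Nc sm Lc sl xs)"

definition fls_smult :: "'a::field \<Rightarrow> 'a fls \<Rightarrow> 'a fls" where
  "fls_smult r f = fls_const r * f"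

definition fam_smult :: "'a::field \<Rightarrow> ('i \<Rightarrow> 'a fls) \<Rightarrow> ('i \<Rightarrow> 'a fls)" where
  "fam_smult r f = (\<lambda>i. fls_const r * f i)"

definition fam_prod :: "'i set \<Rightarrow> 'b::zero set \<Rightarrow> ('i \<Rightarrow> 'b) set" where
  "fam_prod I A = {f. (\<forall>i\<in>I. f i \<in> A) \<and> (\<forall>i. i \<notin> I \<longrightarrow> f i = 0)}"

end

theory Submission
  imports Defs
begin

text \<open>The Gauss inequality v0(f g) \<le> v0 f + v0 g makes U multiplicative and the quotient
  T/R[[X]] torsion-free over R; the same then holds componentwise for T^I/R[[X]]^I.
  Over a valuation ring, a submodule N of M with M/N torsion-free is pure: a relation in
  M \<otimes> L involves only finitely many elements of M, these lie in N + R S for a finite S that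
  is independent modulo N (a finitely generated torsion-free module over a valuation ring is
  free), and the R-linear retraction N + R S \<rightarrow> N carries the relation into N \<otimes> L.\<close>

section \<open>Valuations\<close>

locale valued_field =
  fixes v :: "'a::field \<Rightarrow> ereal"
  assumes valuation: "valuation v"
begin

lemma val_neq_minf: "v x \<noteq> -\<infinity>"
  and val_eq_inf_iff: "v x = \<infinity> \<longleftrightarrow> x = 0"
  and val_mult: "v (x * y) = v x + v y"
  and val_add_ge_min: "min (v x) (v y) \<le> v (x + y)"
  using valuation by (simp_all add: valuation_def)

lemma val_abs_neq_inf: "x \<noteq> 0 \<Longrightarrow> \<bar>v x\<bar> \<noteq> \<infinity>"
  using val_neq_minf[of x] val_eq_inf_iff[of x] by (cases "v x") auto

lemma val_zero [simp]: "v 0 = \<infinity>"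
  using val_eq_inf_iff by simp

lemma val_one [simp]: "v 1 = 0"
proof -
  have "v 1 = v 1 + v 1" using val_mult[of 1 1] by simp
  with val_abs_neq_inf[of 1] show ?thesis by (cases "v 1") auto
qed

lemma val_minus_one: "v (-1) = 0"
proof -
  have "0 = v (-1) + v (-1)" using val_mult[of "-1" "-1"] by simp
  with val_abs_neq_inf[of "-1"] show ?thesis by (cases "v (-1)") auto
qed

lemma val_uminus [simp]: "v (- x) = v x"
  using val_mult[of "-1" x] val_minus_one by simp

lemma val_add_eq_left:
  assumes "v x < v y"
  shows "v (x + y) = v x"
proof -
  have "min (v (x + y)) (v (- y)) \<le> v (x + y + - y)" by (rule val_add_ge_min)
  then have "min (v (x + y)) (v y) \<le> v x" by simp
  with val_add_ge_min[of x y] assms show ?thesis by (auto simp: min_def split: if_splits)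
qed

lemma val_sum_gt:
  assumes "finite A" "c < \<infinity>" "\<And>i. i \<in> A \<Longrightarrow> c < v (f i)"
  shows "c < v (sum f A)"
  using assms
proof (induction A rule: finite_induct)
  case (insert x A)
  then have "c < min (v (f x)) (v (sum f A))" by simp
  also have "\<dots> \<le> v (f x + sum f A)" by (rule val_add_ge_min)
  finally show ?case using insert by simp
qed simp

lemma val_divide:
  assumes "a \<noteq> 0"
  shows "v (b / a) = v b - v a"
proof -
  have "v b = v (b / a) + v a" using val_mult[of "b / a" a] assms by simp
  with val_abs_neq_inf[OF assms] show ?thesis by (cases "v a"; cases "v (b / a)") auto
qed

lemma val_ring_zero: "0 \<in> val_ring v"
  and val_ring_one: "1 \<in> val_ring v"
  by (simp_all add: val_ring_def)

lemma val_ring_add: "x \<in> val_ring v \<Longrightarrow> y \<in> val_ring v \<Longrightarrow> x + y \<in> val_ring v"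
  using val_add_ge_min[of x y] by (auto simp: val_ring_def min_def split: if_splits)

lemma val_ring_mult: "x \<in> val_ring v \<Longrightarrow> y \<in> val_ring v \<Longrightarrow> x * y \<in> val_ring v"
  by (simp add: val_ring_def val_mult)

lemma val_ring_uminus: "x \<in> val_ring v \<Longrightarrow> - x \<in> val_ring v"
  by (simp add: val_ring_def)

lemma val_ring_diff: "x \<in> val_ring v \<Longrightarrow> y \<in> val_ring v \<Longrightarrow> x - y \<in> val_ring v"
  using val_ring_add[of x "- y"] val_ring_uminus[of y] by simp

lemma val_ring_sum: "(\<And>i. i \<in> A \<Longrightarrow> f i \<in> val_ring v) \<Longrightarrow> sum f A \<in> val_ring v"
  by (induction A rule: infinite_finite_induct) (auto intro: val_ring_zero val_ring_add)

lemma divide_in_val_ring: "a \<noteq> 0 \<Longrightarrow> v a \<le> v b \<Longrightarrow> b / a \<in> val_ring v"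
  using val_divide[of a b] val_abs_neq_inf[of a] by (cases "v a"; cases "v b") (auto simp: val_ring_def)

end

section \<open>Gauss' inequality for v0\<close>

lemma ereal_seq_last_minimum:
  fixes F :: "nat \<Rightarrow> ereal" and s :: real
  assumes "s > 0" and growth: "\<And>i. ereal (real i * s) \<le> F i" and "F n < \<infinity>"
  obtains p where "F p \<le> F n" "\<And>i. F p \<le> F i" "\<And>i. p < i \<Longrightarrow> F p < F i"
proof -
  obtain r where r: "F n = ereal r"
    using \<open>F n < \<infinity>\<close> growth[of n] \<open>s > 0\<close> by (cases "F n") auto
  obtain B :: nat where "r / s < real B" using reals_Archimedean2 by blast
  then have B: "r < real B * s" using \<open>s > 0\<close> by (simp add: divide_less_eq)
  have beyond: "F n < F i" if "B < i" for i
  proof -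
    have "real B * s < real i * s" using that \<open>s > 0\<close> by simp
    then have "F n < ereal (real i * s)" using B r by simp
    then show ?thesis using growth[of i] by (rule order_less_le_trans)
  qed
  define a where "a = Min (F ` {..B})"
  define p where "p = Max {i. i \<le> B \<and> F i = a}"
  have "a \<in> F ` {..B}" unfolding a_def by (rule Min_in) auto
  then have "p \<in> {i. i \<le> B \<and> F i = a}"
    unfolding p_def by (intro Max_in) auto
  then have Fp: "F p = a" "p \<le> B" by auto
  have below: "a \<le> F i" if "i \<le> B" for i using that unfolding a_def by simp
  have "n \<le> B" using beyond[of n] by (cases "n \<le> B") auto
  then have "a \<le> F n" by (rule below)
  show ?thesis
  proof
    show "F p \<le> F n" using Fp \<open>a \<le> F n\<close> by simp
    show "F p \<le> F i" for i using Fp below[of i] beyond[of i] \<open>a \<le> F n\<close> by (cases "i \<le> B") auto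
    show "F p < F i" if "p < i" for i
    proof (cases "i \<le> B")
      case True
      have "F i \<noteq> a"
      proof
        assume "F i = a"
        with True have "i \<le> p" unfolding p_def by (intro Max_ge) auto
        with that show False by simp
      qed
      then show ?thesis using below[OF True] Fp by simp
    next
      case False
      then show ?thesis using beyond[of i] \<open>a \<le> F n\<close> Fp by simp
    qed
  qed
qed

context valued_field
begin

lemma val_fps_coeff_nonneg: "f \<in> val_fps v \<Longrightarrow> 0 \<le> v (f $ n)"
  by (simp add: val_fps_def val_ring_def)

lemma v0_le_coeff: "v0 v f \<le> v (f $ n)"
  unfolding v0_def by (rule INF_lower) simp

lemma v0_nonneg: "f \<in> val_fps v \<Longrightarrow> 0 \<le> v0 v f"
  unfolding v0_def by (rule INF_greatest) (simp add: val_fps_coeff_nonneg)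

lemma val_coeff_mult_dominant:
  assumes "v (f $ p * g $ q) < \<infinity>"
    and dominant: "\<And>i. i \<le> p + q \<Longrightarrow> i \<noteq> p \<Longrightarrow> v (f $ p * g $ q) < v (f $ i * g $ (p + q - i))"
  shows "v ((f * g) $ (p + q)) = v (f $ p) + v (g $ q)"
proof -
  have "(f * g) $ (p + q) = f $ p * g $ q + (\<Sum>i\<in>{0..p + q} - {p}. f $ i * g $ (p + q - i))"
    unfolding fps_mult_nth by (subst sum.remove[of _ p]) auto
  moreover have "v (f $ p * g $ q) < v (\<Sum>i\<in>{0..p + q} - {p}. f $ i * g $ (p + q - i))"
    using assms by (intro val_sum_gt) auto
  ultimately show ?thesis by (simp add: val_add_eq_left val_mult)
qed

text \<open>Weighting the i-th coefficient by i s makes the infimum attained. At the index p + q,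
  where p and q are the last indices of minimal weighted value for f and g, the term
  f_p g_q strictly dominates all other terms of the coefficient of f g.\<close>
lemma coeff_mult_val_le_weighted:
  assumes f: "f \<in> val_fps v" and g: "g \<in> val_fps v" and "s > 0"
    and "v (f $ n) < \<infinity>" and "v (g $ m) < \<infinity>"
  shows "\<exists>k. v ((f * g) $ k) \<le> v (f $ n) + v (g $ m) + ereal (real (n + m) * s)"
proof -
  define F where "F i = v (f $ i) + ereal (real i * s)" for i
  define G where "G i = v (g $ i) + ereal (real i * s)" for i
  have growth: "ereal (real i * s) \<le> F i" "ereal (real i * s) \<le> G i" for i
    unfolding F_def G_def using val_fps_coeff_nonneg[OF f] val_fps_coeff_nonneg[OF g]
    by (simp_all add: add_increasing)
  obtain p where p: "F p \<le> F n" "\<And>i. F p \<le> F i" "\<And>i. p < i \<Longrightarrow> F p < F i"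
    using ereal_seq_last_minimum[OF \<open>s > 0\<close> growth(1)] \<open>v (f $ n) < \<infinity>\<close> unfolding F_def by auto
  obtain q where q: "G q \<le> G m" "\<And>i. G q \<le> G i" "\<And>i. q < i \<Longrightarrow> G q < G i"
    using ereal_seq_last_minimum[OF \<open>s > 0\<close> growth(2)] \<open>v (g $ m) < \<infinity>\<close> unfolding G_def by auto
  have "F n < \<infinity>" "G m < \<infinity>"
    using \<open>v (f $ n) < \<infinity>\<close> \<open>v (g $ m) < \<infinity>\<close> by (simp_all add: F_def G_def)
  have Fp: "F p < \<infinity>" using p(1) \<open>F n < \<infinity>\<close> by (rule le_less_trans)
  have Gq: "G q < \<infinity>" using q(1) \<open>G m < \<infinity>\<close> by (rule le_less_trans)
  have "0 \<le> ereal (real i * s)" for i using \<open>s > 0\<close> by simp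
  then have Fp0: "0 \<le> F p" and Gq0: "0 \<le> G q"
    using growth[of p] growth[of q] by (blast intro: order_trans)+
  define k where "k = p + q"
  have weighted: "F i + G j = v (f $ i * g $ j) + ereal (real k * s)" if "i + j = k" for i j
  proof -
    have "ereal (real i * s) + ereal (real j * s) = ereal (real k * s)"
      using that by (simp flip: that add: distrib_right)
    then show ?thesis unfolding F_def G_def val_mult by (metis add.assoc add.commute)
  qed
  have dominant: "v (f $ p * g $ q) < v (f $ i * g $ (k - i))" if "i \<le> k" "i \<noteq> p" for i
  proof -
    have "F p + G q < F i + G (k - i)"
    proof (cases "p < i")
      case True
      have "G q + F p < G (k - i) + F i"
        using q(2) Gq0 _ p(3)[OF True] by (rule ereal_add_strict_mono) (use Gq in simp)
      then show ?thesis by (simp only: add.commute)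
    next
      case False
      with that have "q < k - i" by (simp add: k_def)
      show ?thesis
        using p(2) Fp0 _ q(3)[OF \<open>q < k - i\<close>] by (rule ereal_add_strict_mono) (use Fp in simp)
    qed
    then have "v (f $ p * g $ q) + ereal (real k * s) < v (f $ i * g $ (k - i)) + ereal (real k * s)"
      using weighted[of p q] weighted[of i "k - i"] that by (simp add: k_def)
    then show ?thesis by (cases "v (f $ p * g $ q)"; cases "v (f $ i * g $ (k - i))") auto
  qed
  have "v (f $ p * g $ q) < \<infinity>"
    using weighted[of p q] Fp Gq by (auto simp: k_def)
  then have "v ((f * g) $ k) = v (f $ p * g $ q)"
    using val_coeff_mult_dominant[of f p g q] dominant unfolding k_def by (simp add: val_mult)
  also have "\<dots> \<le> v (f $ p * g $ q) + ereal (real k * s)"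
    using \<open>s > 0\<close> by (simp add: add_increasing2)
  also have "\<dots> = F p + G q" using weighted[of p q] by (simp add: k_def)
  also have "\<dots> \<le> F n + G m" using p(1) q(1) by (rule add_mono)
  also have "\<dots> = v (f $ n) + v (g $ m) + (ereal (real n * s) + ereal (real m * s))"
    unfolding F_def G_def by (simp only: ac_simps)
  also have "\<dots> = v (f $ n) + v (g $ m) + ereal (real (n + m) * s)"
    by (simp add: distrib_right)
  finally show ?thesis by blast
qed

lemma v0_mult_le_coeff_val:
  assumes f: "f \<in> val_fps v" and g: "g \<in> val_fps v"
  shows "v0 v (f * g) \<le> v (f $ n) + v (g $ m)"
proof (cases "v (f $ n) < \<infinity> \<and> v (g $ m) < \<infinity>")
  case False
  then show ?thesis
    using val_fps_coeff_nonneg[OF f, of n] val_fps_coeff_nonneg[OF g, of m]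
    by (auto simp: less_top[symmetric])
next
  case True
  show ?thesis
  proof (rule ereal_le_epsilon2)
    fix e :: real
    assume "0 < e"
    define s where "s = e / real (n + m + 1)"
    have "s > 0" unfolding s_def using \<open>0 < e\<close> by simp
    then obtain k where k: "v ((f * g) $ k) \<le> v (f $ n) + v (g $ m) + ereal (real (n + m) * s)"
      using coeff_mult_val_le_weighted[OF f g] True by blast
    have "real (n + m) * s \<le> e" unfolding s_def using \<open>0 < e\<close> by (simp add: field_simps)
    have "v0 v (f * g) \<le> v ((f * g) $ k)" by (rule v0_le_coeff)
    also have "\<dots> \<le> v (f $ n) + v (g $ m) + ereal (real (n + m) * s)" by (rule k)
    also have "\<dots> \<le> v (f $ n) + v (g $ m) + ereal e"
      using \<open>real (n + m) * s \<le> e\<close> by (intro add_left_mono) simp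
    finally show "v0 v (f * g) \<le> v (f $ n) + v (g $ m) + ereal e" .
  qed
qed

lemma v0_mult_le:
  assumes f: "f \<in> val_fps v" and g: "g \<in> val_fps v"
  shows "v0 v (f * g) \<le> v0 v f + v0 v g"
proof -
  have "v0 v f + v0 v g = (INF n. v (f $ n) + v0 v g)"
    unfolding v0_def[of v f]
    by (rule INF_ereal_add_left[symmetric]) (use v0_nonneg[OF g] val_fps_coeff_nonneg[OF f] in auto)
  also have "\<dots> = (INF n. INF m. v (f $ n) + v (g $ m))"
    unfolding v0_def[of v g]
    by (rule INF_cong[OF refl], rule INF_ereal_add_right[symmetric])
       (use val_fps_coeff_nonneg[OF g] val_neq_minf in auto)
  finally show ?thesis by (auto intro!: INF_greatest v0_mult_le_coeff_val[OF f g])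
qed

end

section \<open>The modules R[[X]] \<subseteq> T\<close>

context valued_field
begin

lemma fps_const_in_val_fps: "r \<in> val_ring v \<Longrightarrow> fps_const r \<in> val_fps v"
  by (simp add: val_fps_def val_ring_zero)

lemma one_in_val_fps: "1 \<in> val_fps v"
  by (simp add: val_fps_def val_ring_zero val_ring_one)

lemma val_fps_add: "f \<in> val_fps v \<Longrightarrow> g \<in> val_fps v \<Longrightarrow> f + g \<in> val_fps v"
  by (simp add: val_fps_def val_ring_add)

lemma val_fps_uminus: "f \<in> val_fps v \<Longrightarrow> - f \<in> val_fps v"
  by (simp add: val_fps_def val_ring_uminus)

lemma val_fps_mult: "f \<in> val_fps v \<Longrightarrow> g \<in> val_fps v \<Longrightarrow> f * g \<in> val_fps v"
  by (simp add: val_fps_def fps_mult_nth val_ring_sum val_ring_mult)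

lemma val_le_v0_const_mult: "f \<in> val_fps v \<Longrightarrow> v r \<le> v0 v (fps_const r * f)"
  unfolding v0_def by (rule INF_greatest) (simp add: val_mult add_increasing2 val_fps_coeff_nonneg)

lemma const_divide_in_val_fps:
  assumes "r \<noteq> 0" "v r \<le> v0 v g"
  shows "fps_const (1 / r) * g \<in> val_fps v"
  unfolding val_fps_def mem_Collect_eq
proof
  fix n
  have "v r \<le> v (g $ n)" using assms(2) v0_le_coeff by (rule order_trans)
  then show "(fps_const (1 / r) * g) $ n \<in> val_ring v"
    using divide_in_val_ring[OF assms(1)] by simp
qed

lemma v0_one: "v0 v 1 = 0"
  using v0_le_coeff[of 1 0] v0_nonneg[OF one_in_val_fps] by simp

lemma one_in_U: "1 \<in> U_set v"
  by (simp add: U_set_def one_in_val_fps v0_one)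

lemma U_mult: "u \<in> U_set v \<Longrightarrow> w \<in> U_set v \<Longrightarrow> u * w \<in> U_set v"
  using v0_mult_le[of u w] v0_nonneg[OF val_fps_mult, of u w]
  by (simp add: U_set_def val_fps_mult)

lemma U_nonzero: "u \<in> U_set v \<Longrightarrow> u \<noteq> 0"
  by (auto simp: U_set_def v0_def)

lemma RX_setI: "f \<in> val_fps v \<Longrightarrow> fps_to_fls f \<in> RX_set v"
  by (simp add: RX_set_def)

lemma T_setI: "f \<in> val_fps v \<Longrightarrow> u \<in> U_set v \<Longrightarrow> fps_to_fls f / fps_to_fls u \<in> T_set v"
  by (auto simp: T_set_def)

lemma RX_subset_T: "RX_set v \<subseteq> T_set v"
  using T_setI[OF _ one_in_U] by (auto simp: RX_set_def)

lemma RX_add: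
  assumes "x \<in> RX_set v" "y \<in> RX_set v"
  shows "x + y \<in> RX_set v"
proof -
  obtain f g where "x = fps_to_fls f" "y = fps_to_fls g" "f \<in> val_fps v" "g \<in> val_fps v"
    using assms by (auto simp: RX_set_def)
  then show ?thesis using RX_setI[OF val_fps_add] by simp
qed

lemma RX_uminus: "x \<in> RX_set v \<Longrightarrow> - x \<in> RX_set v"
  using RX_setI[OF val_fps_uminus] by (auto simp: RX_set_def)

lemma RX_const_mult:
  assumes "r \<in> val_ring v" "x \<in> RX_set v"
  shows "fls_const r * x \<in> RX_set v"
proof -
  obtain f where "x = fps_to_fls f" "f \<in> val_fps v"
    using assms(2) by (auto simp: RX_set_def)
  then show ?thesis
    using RX_setI[OF val_fps_mult[OF fps_const_in_val_fps[OF assms(1)]]]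
    by (simp add: fls_times_fps_to_fls)
qed

lemma T_add:
  assumes "x \<in> T_set v" "y \<in> T_set v"
  shows "x + y \<in> T_set v"
proof -
  obtain f u g w where x: "x = fps_to_fls f / fps_to_fls u" "f \<in> val_fps v" "u \<in> U_set v"
    and y: "y = fps_to_fls g / fps_to_fls w" "g \<in> val_fps v" "w \<in> U_set v"
    using assms by (auto simp: T_set_def)
  have "x + y = fps_to_fls (f * w + g * u) / fps_to_fls (u * w)"
    using U_nonzero[OF x(3)] U_nonzero[OF y(3)]
    by (simp add: x(1) y(1) fls_times_fps_to_fls add_frac_eq)
  moreover have "f * w + g * u \<in> val_fps v"
    using x y by (auto simp: U_set_def intro: val_fps_add val_fps_mult)
  ultimately show ?thesis using T_setI U_mult[OF x(3) y(3)] by metis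
qed

lemma T_uminus:
  assumes "x \<in> T_set v"
  shows "- x \<in> T_set v"
proof -
  obtain f u where "x = fps_to_fls f / fps_to_fls u" "f \<in> val_fps v" "u \<in> U_set v"
    using assms by (auto simp: T_set_def)
  then show ?thesis using T_setI[OF val_fps_uminus] by simp
qed

lemma T_const_mult:
  assumes "r \<in> val_ring v" "x \<in> T_set v"
  shows "fls_const r * x \<in> T_set v"
proof -
  obtain f u where "x = fps_to_fls f / fps_to_fls u" "f \<in> val_fps v" "u \<in> U_set v"
    using assms(2) by (auto simp: T_set_def)
  then show ?thesis
    using T_setI[OF val_fps_mult[OF fps_const_in_val_fps[OF assms(1)]]]
    by (simp add: fls_times_fps_to_fls)
qed

lemma module_on_fls_smultI:
  assumes "0 \<in> A" "\<And>x y. x \<in> A \<Longrightarrow> y \<in> A \<Longrightarrow> x + y \<in> A" "\<And>x. x \<in> A \<Longrightarrow> - x \<in> A"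
    "\<And>r x. r \<in> R \<Longrightarrow> x \<in> A \<Longrightarrow> fls_const r * x \<in> A"
  shows "module_on R A fls_smult"
  using assms unfolding module_on_def fls_smult_def
  by (simp add: distrib_left distrib_right flip: fls_plus_const mult.assoc)

lemma module_on_RX: "module_on (val_ring v) (RX_set v) fls_smult"
  by (rule module_on_fls_smultI)
    (use RX_setI[of 0] RX_add RX_uminus RX_const_mult in \<open>auto simp: val_fps_def val_ring_zero\<close>)

lemma module_on_T: "module_on (val_ring v) (T_set v) fls_smult"
  by (rule module_on_fls_smultI)
    (use T_add T_uminus T_const_mult RX_subset_T module_on_RX in \<open>auto simp: module_on_def\<close>)

text \<open>Clearing the denominator u turns r t = g into r f = g u, and Gauss' inequality
  gives v r \<le> v0 g + v0 u = v0 g.\<close>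
lemma RX_saturated_in_T:
  assumes r: "r \<in> val_ring v" "r \<noteq> 0" and "t \<in> T_set v" and "fls_const r * t \<in> RX_set v"
  shows "t \<in> RX_set v"
proof -
  obtain f u where t: "t = fps_to_fls f / fps_to_fls u" "f \<in> val_fps v" "u \<in> U_set v"
    using \<open>t \<in> T_set v\<close> by (auto simp: T_set_def)
  obtain g where g: "fls_const r * t = fps_to_fls g" "g \<in> val_fps v"
    using \<open>fls_const r * t \<in> RX_set v\<close> by (auto simp: RX_set_def)
  have u: "u \<in> val_fps v" "v0 v u = 0" using t(3) by (auto simp: U_set_def)
  have "fps_to_fls (fps_const r * f) = fls_const r * t * fps_to_fls u"
    using U_nonzero[OF t(3)] by (simp add: t(1) fls_times_fps_to_fls)
  also have "\<dots> = fps_to_fls (g * u)" by (simp add: g(1) fls_times_fps_to_fls)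
  finally have "fps_const r * f = g * u" by simp
  then have "v r \<le> v0 v (g * u)" using val_le_v0_const_mult[OF t(2), of r] by simp
  also have "\<dots> \<le> v0 v g" using v0_mult_le[OF g(2) u(1)] u(2) by simp
  finally have "fps_const (1 / r) * g \<in> val_fps v" by (rule const_divide_in_val_fps[OF r(2)])
  moreover have "t = fps_to_fls (fps_const (1 / r) * g)"
  proof -
    have "t = fls_const (1 / r) * (fls_const r * t)" using r(2) by (simp flip: mult.assoc)
    then show ?thesis by (simp add: g(1) fls_times_fps_to_fls)
  qed
  ultimately show ?thesis by (simp add: RX_set_def)
qed

end

section \<open>Formal combinations and tensor relations\<close>

lemma zspan_mono: "x \<in> zspan S \<Longrightarrow> S \<subseteq> S' \<Longrightarrow> x \<in> zspan S'"
  by (induction rule: zspan.induct) (auto intro: zspan.intros)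

lemma finite_support_diff:
  fixes g h :: "'p \<Rightarrow> 'b::ab_group_add"
  assumes "finite {p. g p \<noteq> 0}" "finite {p. h p \<noteq> 0}"
  shows "finite {p. (g - h) p \<noteq> 0}"
proof -
  have "{p. (g - h) p \<noteq> 0} \<subseteq> {p. g p \<noteq> 0} \<union> {p. h p \<noteq> 0}" by auto
  with assms show ?thesis by (meson finite_Un finite_subset)
qed

lemma finite_support_zspan:
  fixes S :: "('p \<Rightarrow> int) set"
  assumes "\<And>s. s \<in> S \<Longrightarrow> finite {p. s p \<noteq> 0}" "g \<in> zspan S"
  shows "finite {p. g p \<noteq> 0}"
  using assms(2)
proof (induction rule: zspan.induct)
  case (zspan_diff a b)
  from zspan_diff.IH show ?case by (rule finite_support_diff)
qed (simp_all add: assms(1))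

text \<open>The pushforward along (m, l) \<mapsto> (\<psi> m, l); it is meaningful for finitely supported g
  only, since an infinite sum is 0.\<close>
definition push_fst :: "('m \<Rightarrow> 'n) \<Rightarrow> ('m \<times> 'l \<Rightarrow> int) \<Rightarrow> 'n \<times> 'l \<Rightarrow> int" where
  "push_fst \<psi> g q = (\<Sum>p | g p \<noteq> 0 \<and> (\<psi> (fst p), snd p) = q. g p)"

lemma push_fst_eq_sum:
  assumes "finite B" "{p. g p \<noteq> 0} \<subseteq> B"
  shows "push_fst \<psi> g q = (\<Sum>p\<in>B. if (\<psi> (fst p), snd p) = q then g p else 0)"
proof -
  have "push_fst \<psi> g q = (\<Sum>p | p \<in> B \<and> (\<psi> (fst p), snd p) = q. g p)"
    unfolding push_fst_def using assms by (intro sum.mono_neutral_left) auto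
  then show ?thesis using assms(1) by (simp add: sum.inter_filter)
qed

lemma push_fst_add:
  fixes g h :: "'m \<times> 'l \<Rightarrow> int" and \<psi> :: "'m \<Rightarrow> 'n"
  assumes "finite {p. g p \<noteq> 0}" "finite {p. h p \<noteq> 0}"
  shows "push_fst \<psi> (g + h) = push_fst \<psi> g + push_fst \<psi> h"
proof
  fix q :: "'n \<times> 'l"
  let ?B = "{p. g p \<noteq> 0} \<union> {p. h p \<noteq> 0}"
  let ?keep = "\<lambda>f (p :: 'm \<times> 'l). if (\<psi> (fst p), snd p) = q then f p else 0"
  have B: "finite ?B" "{p. g p \<noteq> 0} \<subseteq> ?B" "{p. h p \<noteq> 0} \<subseteq> ?B" "{p. (g + h) p \<noteq> 0} \<subseteq> ?B"
    using assms by auto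
  have "push_fst \<psi> (g + h) q = (\<Sum>p\<in>?B. ?keep g p + ?keep h p)"
    unfolding push_fst_eq_sum[OF B(1,4)] by (rule sum.cong) auto
  also have "\<dots> = push_fst \<psi> g q + push_fst \<psi> h q"
    unfolding push_fst_eq_sum[OF B(1,2)] push_fst_eq_sum[OF B(1,3)] by (rule sum.distrib)
  finally show "push_fst \<psi> (g + h) q = (push_fst \<psi> g + push_fst \<psi> h) q" by simp
qed

lemma push_fst_diff:
  assumes "finite {p. g p \<noteq> 0}" "finite {p. h p \<noteq> 0}"
  shows "push_fst \<psi> (g - h) = push_fst \<psi> g - push_fst \<psi> h"
proof -
  have "push_fst \<psi> g = push_fst \<psi> (g - h) + push_fst \<psi> h"
    using push_fst_add[OF finite_support_diff[OF assms] assms(2)] by (simp only: diff_add_cancel)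
  then show ?thesis by (simp only: eq_diff_eq)
qed

lemma finite_support_delta: "finite {q. delta p q \<noteq> 0}"
  by (simp add: delta_def)

lemma push_fst_delta: "push_fst \<psi> (delta p) = delta (\<psi> (fst p), snd p)"
proof
  fix q
  show "push_fst \<psi> (delta p) q = delta (\<psi> (fst p), snd p) q"
    by (subst push_fst_eq_sum[of "{p}"]) (auto simp: delta_def)
qed

lemma finite_support_sum_list_delta: "finite {q. (\<Sum>p\<leftarrow>xs. delta p) q \<noteq> 0}"
proof (rule finite_subset)
  show "{q. (\<Sum>p\<leftarrow>xs. delta p) q \<noteq> 0} \<subseteq> set xs"
  proof (induction xs)
    case (Cons a xs)
    show ?case
    proof
      fix q
      assume "q \<in> {q. (\<Sum>p\<leftarrow>a # xs. delta p) q \<noteq> 0}"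
      then have "q = a \<or> (\<Sum>p\<leftarrow>xs. delta p) q \<noteq> 0" by (auto simp: delta_def)
      with Cons.IH show "q \<in> set (a # xs)" by auto
    qed
  qed simp
qed simp

lemma push_fst_zero: "push_fst \<psi> 0 = 0"
  by (simp add: push_fst_def fun_eq_iff)

lemma push_fst_sum_list_delta:
  "push_fst \<psi> (\<Sum>p\<leftarrow>xs. delta p) = (\<Sum>p\<leftarrow>xs. delta (\<psi> (fst p), snd p))"
proof (induction xs)
  case Nil
  show ?case by (simp only: list.map sum_list.Nil push_fst_zero)
next
  case (Cons a xs)
  have "push_fst \<psi> (delta a + (\<Sum>p\<leftarrow>xs. delta p))
      = delta (\<psi> (fst a), snd a) + push_fst \<psi> (\<Sum>p\<leftarrow>xs. delta p)"
    by (simp only: push_fst_add[OF finite_support_delta finite_support_sum_list_delta] push_fst_delta)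
  then show ?case by (simp only: list.map sum_list.Cons Cons.IH)
qed

lemma tensor_rels_add_leftI:
  "m \<in> Mc \<Longrightarrow> m' \<in> Mc \<Longrightarrow> l \<in> Lc \<Longrightarrow>
    delta (m + m', l) - delta (m, l) - delta (m', l) \<in> tensor_rels R Mc sm Lc sl"
  unfolding tensor_rels_def
  by (rule UnI1, rule UnI1, rule CollectI, rule exI[of _ m], rule exI[of _ m'], rule exI[of _ l]) simp

lemma tensor_rels_add_rightI:
  "m \<in> Mc \<Longrightarrow> l \<in> Lc \<Longrightarrow> l' \<in> Lc \<Longrightarrow>
    delta (m, l + l') - delta (m, l) - delta (m, l') \<in> tensor_rels R Mc sm Lc sl"
  unfolding tensor_rels_def
  by (rule UnI1, rule UnI2, rule CollectI, rule exI[of _ m], rule exI[of _ l], rule exI[of _ l']) simp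

lemma tensor_rels_smultI:
  "r \<in> R \<Longrightarrow> m \<in> Mc \<Longrightarrow> l \<in> Lc \<Longrightarrow> delta (sm r m, l) - delta (m, sl r l) \<in> tensor_rels R Mc sm Lc sl"
  unfolding tensor_rels_def
  by (rule UnI2, rule CollectI, rule exI[of _ r], rule exI[of _ m], rule exI[of _ l]) simp

lemma tensor_relsE:
  assumes "s \<in> tensor_rels R Mc sm Lc sl"
  obtains (add_left) m m' l where "s = delta (m + m', l) - delta (m, l) - delta (m', l)"
      "m \<in> Mc" "m' \<in> Mc" "l \<in> Lc"
    | (add_right) m l l' where "s = delta (m, l + l') - delta (m, l) - delta (m, l')"
      "m \<in> Mc" "l \<in> Lc" "l' \<in> Lc"
    | (smult) r m l where "s = delta (sm r m, l) - delta (m, sl r l)" "r \<in> R" "m \<in> Mc" "l \<in> Lc"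
  using assms unfolding tensor_rels_def by (auto 0 0)

lemma tensor_rels_mono:
  assumes "E \<subseteq> E'"
  shows "tensor_rels R E sm Lc sl \<subseteq> tensor_rels R E' sm Lc sl"
proof
  fix s
  assume "s \<in> tensor_rels R E sm Lc sl"
  then show "s \<in> tensor_rels R E' sm Lc sl"
    by (cases rule: tensor_relsE)
      (use assms in \<open>auto intro: tensor_rels_add_leftI tensor_rels_add_rightI tensor_rels_smultI\<close>)
qed

lemma finite_support_tensor_rels:
  assumes "s \<in> tensor_rels R Mc sm Lc sl"
  shows "finite {p. s p \<noteq> 0}"
  using assms by (cases rule: tensor_relsE; simp only: finite_support_diff finite_support_delta)

text \<open>Each relation involves at most two elements of M, so a relation in M \<otimes> L holds
  already over a finite set of elements of M.\<close>
lemma zspan_tensor_rels_finite_carrier: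
  assumes "g \<in> zspan (tensor_rels R Mc sm Lc sl)"
  shows "\<exists>E. finite E \<and> E \<subseteq> Mc \<and> g \<in> zspan (tensor_rels R E sm Lc sl)"
  using assms
proof (induction rule: zspan.induct)
  case zspan_zero
  show ?case by (intro exI[of _ "{}"] conjI zspan.zspan_zero) simp_all
next
  case (zspan_gen s)
  from zspan_gen.hyps obtain E where "finite E" "E \<subseteq> Mc" "s \<in> tensor_rels R E sm Lc sl"
  proof (cases rule: tensor_relsE)
    case (add_left m m' l)
    then have "s \<in> tensor_rels R {m, m'} sm Lc sl" by (simp add: tensor_rels_add_leftI)
    with add_left show ?thesis by (intro that[of "{m, m'}"]) simp_all
  next
    case (add_right m l l')
    then have "s \<in> tensor_rels R {m} sm Lc sl" by (simp add: tensor_rels_add_rightI)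
    with add_right show ?thesis by (intro that[of "{m}"]) simp_all
  next
    case (smult r m l)
    then have "s \<in> tensor_rels R {m} sm Lc sl" by (simp add: tensor_rels_smultI)
    with smult show ?thesis by (intro that[of "{m}"]) simp_all
  qed
  then show ?case by (meson zspan.zspan_gen)
next
  case (zspan_diff a b)
  then obtain A B where AB: "finite A" "A \<subseteq> Mc" "finite B" "B \<subseteq> Mc"
    and "a \<in> zspan (tensor_rels R A sm Lc sl)" "b \<in> zspan (tensor_rels R B sm Lc sl)" by blast
  then have "a \<in> zspan (tensor_rels R (A \<union> B) sm Lc sl)" "b \<in> zspan (tensor_rels R (A \<union> B) sm Lc sl)"
    by (meson sup_ge1 sup_ge2 tensor_rels_mono zspan_mono)+
  with AB show ?case by (intro exI[of _ "A \<union> B"] conjI zspan.zspan_diff) simp_all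
qed

lemma push_fst_diff_delta:
  "finite {p. g p \<noteq> 0} \<Longrightarrow> push_fst \<psi> (g - delta p) = push_fst \<psi> g - delta (\<psi> (fst p), snd p)"
  by (simp only: push_fst_diff[OF _ finite_support_delta] push_fst_delta)

lemma push_fst_zspan_tensor_rels:
  fixes \<psi> :: "'m::ab_group_add \<Rightarrow> 'm" and sm :: "'r::comm_ring_1 \<Rightarrow> 'm \<Rightarrow> 'm" and sl :: "'r \<Rightarrow> 'l::ab_group_add \<Rightarrow> 'l"
  assumes additive: "\<And>x y. x \<in> E \<Longrightarrow> y \<in> E \<Longrightarrow> \<psi> (x + y) = \<psi> x + \<psi> y"
    and homogeneous: "\<And>r x. r \<in> R \<Longrightarrow> x \<in> E \<Longrightarrow> \<psi> (sm r x) = sm r (\<psi> x)"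
    and into: "\<And>x. x \<in> E \<Longrightarrow> \<psi> x \<in> Nc"
    and "g \<in> zspan (tensor_rels R E sm Lc sl)"
  shows "push_fst \<psi> g \<in> zspan (tensor_rels R Nc sm Lc sl)"
  using assms(4)
proof (induction rule: zspan.induct)
  case zspan_zero
  show ?case by (simp only: push_fst_zero zspan.zspan_zero)
next
  case (zspan_gen s)
  have fin: "finite {p. (delta a - delta b) p \<noteq> 0}" for a b :: "'m \<times> 'l"
    by (intro finite_support_diff finite_support_delta)
  from zspan_gen.hyps have "push_fst \<psi> s \<in> tensor_rels R Nc sm Lc sl"
  proof (cases rule: tensor_relsE)
    case (add_left m m' l)
    then have "push_fst \<psi> s = delta (\<psi> m + \<psi> m', l) - delta (\<psi> m, l) - delta (\<psi> m', l)"
      by (simp only: push_fst_diff_delta fin finite_support_delta push_fst_delta additive fst_conv snd_conv)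
    then show ?thesis using add_left into by (simp add: tensor_rels_add_leftI)
  next
    case (add_right m l l')
    then have "push_fst \<psi> s = delta (\<psi> m, l + l') - delta (\<psi> m, l) - delta (\<psi> m, l')"
      by (simp only: push_fst_diff_delta fin finite_support_delta push_fst_delta fst_conv snd_conv)
    then show ?thesis using add_right into by (simp add: tensor_rels_add_rightI)
  next
    case (smult r m l)
    then have "push_fst \<psi> s = delta (sm r (\<psi> m), l) - delta (\<psi> m, sl r l)"
      by (simp only: push_fst_diff_delta finite_support_delta push_fst_delta homogeneous fst_conv snd_conv)
    then show ?thesis using smult into by (simp add: tensor_rels_smultI)
  qed
  then show ?case by (rule zspan.zspan_gen)
next
  case (zspan_diff a b)
  have "finite {p. a p \<noteq> 0}" "finite {p. b p \<noteq> 0}"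
    using zspan_diff.hyps by (auto intro: finite_support_zspan finite_support_tensor_rels)
  then show ?case using zspan_diff.IH by (simp only: push_fst_diff zspan.zspan_diff)
qed

section \<open>Purity of submodules with torsion-free quotient\<close>

locale torsion_free_quotient = valued_field v
  for v :: "'a::field \<Rightarrow> ereal" +
  fixes Mc :: "'m::ab_group_add set" and sm :: "'a \<Rightarrow> 'm \<Rightarrow> 'm" and Nc :: "'m set"
  assumes module_M: "module_on (val_ring v) Mc sm"
    and module_N: "module_on (val_ring v) Nc sm"
    and N_subset_M: "Nc \<subseteq> Mc"
    and torsion_free: "\<And>r x. r \<in> val_ring v \<Longrightarrow> r \<noteq> 0 \<Longrightarrow> x \<in> Mc \<Longrightarrow> sm r x \<in> Nc \<Longrightarrow> x \<in> Nc"
begin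

lemma M_zero: "0 \<in> Mc"
  and M_add: "x \<in> Mc \<Longrightarrow> y \<in> Mc \<Longrightarrow> x + y \<in> Mc"
  and M_smult: "r \<in> val_ring v \<Longrightarrow> x \<in> Mc \<Longrightarrow> sm r x \<in> Mc"
  and smult_add: "r \<in> val_ring v \<Longrightarrow> x \<in> Mc \<Longrightarrow> y \<in> Mc \<Longrightarrow> sm r (x + y) = sm r x + sm r y"
  and add_smult: "r \<in> val_ring v \<Longrightarrow> s \<in> val_ring v \<Longrightarrow> x \<in> Mc \<Longrightarrow> sm (r + s) x = sm r x + sm s x"
  and mult_smult: "r \<in> val_ring v \<Longrightarrow> s \<in> val_ring v \<Longrightarrow> x \<in> Mc \<Longrightarrow> sm (r * s) x = sm r (sm s x)"
  and one_smult: "x \<in> Mc \<Longrightarrow> sm 1 x = x"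
  using module_M unfolding module_on_def by auto

lemma N_zero: "0 \<in> Nc"
  and N_add: "x \<in> Nc \<Longrightarrow> y \<in> Nc \<Longrightarrow> x + y \<in> Nc"
  and N_uminus: "x \<in> Nc \<Longrightarrow> - x \<in> Nc"
  and N_smult: "r \<in> val_ring v \<Longrightarrow> x \<in> Nc \<Longrightarrow> sm r x \<in> Nc"
  using module_N unfolding module_on_def by auto

lemma N_diff: "x \<in> Nc \<Longrightarrow> y \<in> Nc \<Longrightarrow> x - y \<in> Nc"
  using N_add[of x "- y"] N_uminus[of y] by simp

lemma zero_smult: "x \<in> Mc \<Longrightarrow> sm 0 x = 0"
  using add_smult[of 0 0 x] val_ring_zero by simp

lemma uminus_smult: "r \<in> val_ring v \<Longrightarrow> x \<in> Mc \<Longrightarrow> sm (- r) x = - sm r x"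
  using add_smult[of r "- r" x] val_ring_uminus[of r] zero_smult[of x]
  by (simp add: eq_neg_iff_add_eq_0 add.commute)

lemma diff_smult: "r \<in> val_ring v \<Longrightarrow> s \<in> val_ring v \<Longrightarrow> x \<in> Mc \<Longrightarrow> sm (r - s) x = sm r x - sm s x"
  using add_smult[of r "- s" x] uminus_smult[of s x] val_ring_uminus[of s] by simp

definition lincomb :: "('m \<Rightarrow> 'a) \<Rightarrow> 'm set \<Rightarrow> 'm" where
  "lincomb c S = (\<Sum>x\<in>S. sm (c x) x)"

definition val_coeffs :: "'m set \<Rightarrow> ('m \<Rightarrow> 'a) \<Rightarrow> bool" where
  "val_coeffs S c \<longleftrightarrow> (\<forall>x\<in>S. c x \<in> val_ring v)"

lemma lincomb_in_M: "S \<subseteq> Mc \<Longrightarrow> val_coeffs S c \<Longrightarrow> lincomb c S \<in> Mc"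
  unfolding lincomb_def val_coeffs_def
  by (induction S rule: infinite_finite_induct) (auto intro: M_zero M_add M_smult)

lemma lincomb_add:
  "S \<subseteq> Mc \<Longrightarrow> val_coeffs S c \<Longrightarrow> val_coeffs S d \<Longrightarrow> lincomb c S + lincomb d S = lincomb (\<lambda>x. c x + d x) S"
  unfolding lincomb_def val_coeffs_def by (auto simp: add_smult intro!: sum.cong simp flip: sum.distrib)

lemma lincomb_diff:
  "S \<subseteq> Mc \<Longrightarrow> val_coeffs S c \<Longrightarrow> val_coeffs S d \<Longrightarrow> lincomb c S - lincomb d S = lincomb (\<lambda>x. c x - d x) S"
  unfolding lincomb_def val_coeffs_def by (auto simp: diff_smult intro!: sum.cong simp flip: sum_subtractf)

lemma smult_lincomb:
  assumes "S \<subseteq> Mc" "val_coeffs S c" "r \<in> val_ring v"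
  shows "sm r (lincomb c S) = lincomb (\<lambda>x. r * c x) S"
  using assms unfolding lincomb_def val_coeffs_def
proof (induction S rule: infinite_finite_induct)
  case (insert x F)
  then have "sm r (sm (c x) x + (\<Sum>y\<in>F. sm (c y) y)) = sm r (sm (c x) x) + sm r (\<Sum>y\<in>F. sm (c y) y)"
    using lincomb_in_M[of F c] by (intro smult_add) (auto simp: lincomb_def val_coeffs_def intro: M_smult)
  with insert show ?case by (simp add: mult_smult)
qed (use smult_add[of r 0 0] M_zero in simp_all)

lemma lincomb_cong: "(\<And>x. x \<in> S \<Longrightarrow> c x = d x) \<Longrightarrow> lincomb c S = lincomb d S"
  unfolding lincomb_def by simp

lemma lincomb_remove: "finite S \<Longrightarrow> j \<in> S \<Longrightarrow> lincomb c S = sm (c j) j + lincomb c (S - {j})"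
  unfolding lincomb_def by (rule sum.remove)

lemma lincomb_zero_coeff:
  "finite S \<Longrightarrow> S \<subseteq> Mc \<Longrightarrow> j \<in> S \<Longrightarrow> c j = 0 \<Longrightarrow> lincomb c S = lincomb c (S - {j})"
  using lincomb_remove[of S j c] zero_smult[of j] by auto

lemma lincomb_zero: "S \<subseteq> Mc \<Longrightarrow> lincomb (\<lambda>x. 0) S = 0"
  unfolding lincomb_def by (auto simp: zero_smult intro!: sum.neutral)

definition independent_mod :: "'m set \<Rightarrow> bool" where
  "independent_mod S \<longleftrightarrow> (\<forall>c. val_coeffs S c \<longrightarrow> lincomb c S \<in> Nc \<longrightarrow> (\<forall>x\<in>S. c x = 0))"

definition spans_mod :: "'m set \<Rightarrow> 'm set \<Rightarrow> bool" where
  "spans_mod E S \<longleftrightarrow>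
     finite S \<and> S \<subseteq> Mc \<and> (\<forall>e\<in>E. \<exists>n\<in>Nc. \<exists>c. val_coeffs S c \<and> e = n + lincomb c S)"

lemma spans_mod_refl:
  assumes "finite E" "E \<subseteq> Mc"
  shows "spans_mod E E"
  unfolding spans_mod_def
proof (intro conjI ballI assms)
  fix e
  assume "e \<in> E"
  define c where "c x = (if x = e then 1 else 0 :: 'a)" for x
  have "lincomb c E = sm 1 e + lincomb c (E - {e})"
    using lincomb_remove[OF assms(1) \<open>e \<in> E\<close>] by (simp add: c_def)
  also have "lincomb c (E - {e}) = lincomb (\<lambda>x. 0) (E - {e})" by (rule lincomb_cong) (simp add: c_def)
  also have "\<dots> = 0" using assms by (intro lincomb_zero) auto
  finally have "e = 0 + lincomb c E"
    using assms \<open>e \<in> E\<close> one_smult[of e] by auto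
  moreover have "val_coeffs E c" by (simp add: val_coeffs_def c_def val_ring_zero val_ring_one)
  ultimately show "\<exists>n\<in>Nc. \<exists>c. val_coeffs E c \<and> e = n + lincomb c E" using N_zero by blast
qed

text \<open>Dividing a relation modulo N by a coefficient of least valuation keeps the coefficients
  in R (R is a valuation ring), and keeps the combination in N (M/N is torsion-free).\<close>
lemma dependent_mod_normalize:
  assumes "finite S" "S \<subseteq> Mc" "\<not> independent_mod S"
  obtains d j where "j \<in> S" "val_coeffs S d" "d j = 1" "lincomb d S \<in> Nc"
proof -
  obtain c x0 where c: "val_coeffs S c" "lincomb c S \<in> Nc" and "x0 \<in> S" "c x0 \<noteq> 0"
    using assms(3) unfolding independent_mod_def by blast
  define m where "m = Min ((\<lambda>x. v (c x)) ` S)"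
  have "m \<in> (\<lambda>x. v (c x)) ` S" unfolding m_def using assms(1) \<open>x0 \<in> S\<close> by (intro Min_in) auto
  then obtain j where "j \<in> S" "v (c j) = m" by blast
  have j_min: "v (c j) \<le> v (c x)" if "x \<in> S" for x
    using \<open>v (c j) = m\<close> assms(1) that unfolding m_def by simp
  have "c j \<noteq> 0"
    using j_min[OF \<open>x0 \<in> S\<close>] \<open>c x0 \<noteq> 0\<close> by (auto simp: val_eq_inf_iff)
  define d where "d x = c x / c j" for x
  have d: "val_coeffs S d"
    using divide_in_val_ring[OF \<open>c j \<noteq> 0\<close> j_min] by (simp add: val_coeffs_def d_def)
  have cj: "c j \<in> val_ring v" using c(1) \<open>j \<in> S\<close> by (simp add: val_coeffs_def)
  have "sm (c j) (lincomb d S) = lincomb (\<lambda>x. c j * d x) S" by (rule smult_lincomb[OF assms(2) d cj])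
  also have "\<dots> = lincomb c S" by (rule lincomb_cong) (simp add: d_def \<open>c j \<noteq> 0\<close>)
  finally have "lincomb d S \<in> Nc"
    using torsion_free[OF cj \<open>c j \<noteq> 0\<close> lincomb_in_M[OF assms(2) d]] c(2) by simp
  moreover have "d j = 1" using \<open>c j \<noteq> 0\<close> by (simp add: d_def)
  ultimately show ?thesis using that \<open>j \<in> S\<close> d by blast
qed

text \<open>A normalized relation d with d j = 1 expresses j modulo N through S - {j}.\<close>
lemma spans_mod_remove:
  assumes "spans_mod E S" "j \<in> S" "val_coeffs S d" "d j = 1" "lincomb d S \<in> Nc"
  shows "spans_mod E (S - {j})"
proof -
  have S: "finite S" "S \<subseteq> Mc" using assms(1) by (auto simp: spans_mod_def)
  have "\<exists>n\<in>Nc. \<exists>c'. val_coeffs (S - {j}) c' \<and> e = n + lincomb c' (S - {j})" if "e \<in> E" for e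
  proof -
    obtain n c where n: "n \<in> Nc" and c: "val_coeffs S c" and e: "e = n + lincomb c S"
      using assms(1) \<open>e \<in> E\<close> by (auto simp: spans_mod_def)
    have cj: "c j \<in> val_ring v" using c \<open>j \<in> S\<close> by (simp add: val_coeffs_def)
    have cd: "val_coeffs S (\<lambda>x. c j * d x)" "val_coeffs S (\<lambda>x. c x - c j * d x)"
      using c assms(3) cj by (auto simp: val_coeffs_def intro: val_ring_mult val_ring_diff)
    have "lincomb c S = sm (c j) (lincomb d S) + (lincomb c S - lincomb (\<lambda>x. c j * d x) S)"
      unfolding smult_lincomb[OF S(2) assms(3) cj] by simp
    also have "lincomb c S - lincomb (\<lambda>x. c j * d x) S = lincomb (\<lambda>x. c x - c j * d x) S"
      by (rule lincomb_diff[OF S(2) c cd(1)])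
    also have "\<dots> = lincomb (\<lambda>x. c x - c j * d x) (S - {j})"
      using S assms(2,4) by (intro lincomb_zero_coeff) auto
    finally have "e = (n + sm (c j) (lincomb d S)) + lincomb (\<lambda>x. c x - c j * d x) (S - {j})"
      using e by (simp add: add.assoc)
    moreover have "n + sm (c j) (lincomb d S) \<in> Nc" using n cj assms(5) by (intro N_add N_smult)
    moreover have "val_coeffs (S - {j}) (\<lambda>x. c x - c j * d x)" using cd(2) by (simp add: val_coeffs_def)
    ultimately show ?thesis by blast
  qed
  moreover have "finite (S - {j})" "S - {j} \<subseteq> Mc" using S by auto
  ultimately show ?thesis by (simp add: spans_mod_def)
qed

lemma exists_independent_spanning:
  assumes "finite E" "E \<subseteq> Mc"
  obtains S where "spans_mod E S" "independent_mod S"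
proof -
  obtain S where S: "spans_mod E S" and least: "\<And>S'. spans_mod E S' \<Longrightarrow> card S \<le> card S'"
    using ex_has_least_nat[of "spans_mod E" E card] spans_mod_refl[OF assms] by blast
  have "independent_mod S"
  proof (rule ccontr)
    assume dependent: "\<not> independent_mod S"
    have "finite S" "S \<subseteq> Mc" using S by (auto simp: spans_mod_def)
    then obtain d j where "j \<in> S" "val_coeffs S d" "d j = 1" "lincomb d S \<in> Nc"
      by (rule dependent_mod_normalize[OF _ _ dependent])
    then have "spans_mod E (S - {j})" by (intro spans_mod_remove[OF S])
    then have "card S \<le> card (S - {j})" by (rule least)
    moreover have "card (S - {j}) < card S" using \<open>finite S\<close> \<open>j \<in> S\<close> by (rule card_Diff1_less)
    ultimately show False by simp
  qed
  with S that show ?thesis by blast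
qed

text \<open>For S independent modulo N, the R-linear projection N + R S \<rightarrow> N (junk outside
  retraction_domain S).\<close>
definition retraction_domain :: "'m set \<Rightarrow> 'm set" where
  "retraction_domain S = {n + lincomb c S | n c. n \<in> Nc \<and> val_coeffs S c}"

definition retraction :: "'m set \<Rightarrow> 'm \<Rightarrow> 'm" where
  "retraction S z = (THE n. n \<in> Nc \<and> (\<exists>c. val_coeffs S c \<and> z = n + lincomb c S))"

lemma independent_modD:
  "independent_mod S \<Longrightarrow> val_coeffs S c \<Longrightarrow> lincomb c S \<in> Nc \<Longrightarrow> x \<in> S \<Longrightarrow> c x = 0"
  unfolding independent_mod_def by blast

lemma retraction_eq:
  assumes S: "S \<subseteq> Mc" "independent_mod S" and "n \<in> Nc" "val_coeffs S c"
  shows "retraction S (n + lincomb c S) = n"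
  unfolding retraction_def
proof (rule the_equality)
  show "n \<in> Nc \<and> (\<exists>c'. val_coeffs S c' \<and> n + lincomb c S = n + lincomb c' S)"
    using assms by blast
next
  fix n'
  assume "n' \<in> Nc \<and> (\<exists>c'. val_coeffs S c' \<and> n + lincomb c S = n' + lincomb c' S)"
  then obtain c' where "n' \<in> Nc" "val_coeffs S c'" and eq: "n + lincomb c S = n' + lincomb c' S"
    by blast
  have "lincomb (\<lambda>x. c x - c' x) S = n' - n"
    using lincomb_diff[OF S(1) \<open>val_coeffs S c\<close> \<open>val_coeffs S c'\<close>] eq by (simp add: algebra_simps)
  moreover have "val_coeffs S (\<lambda>x. c x - c' x)"
    using \<open>val_coeffs S c\<close> \<open>val_coeffs S c'\<close> by (simp add: val_coeffs_def val_ring_diff)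
  ultimately have "c x - c' x = 0" if "x \<in> S" for x
    using independent_modD[OF S(2) _ _ that, of "\<lambda>x. c x - c' x"] N_diff[OF \<open>n' \<in> Nc\<close> \<open>n \<in> Nc\<close>] by simp
  then have "lincomb c S = lincomb c' S" by (intro lincomb_cong) simp
  with eq show "n' = n" by simp
qed

lemma retraction_of_N:
  assumes "S \<subseteq> Mc" "independent_mod S" "n \<in> Nc"
  shows "retraction S n = n"
  using retraction_eq[OF assms, of "\<lambda>x. 0"] lincomb_zero[OF assms(1)]
  by (simp add: val_coeffs_def val_ring_zero)

lemma retraction_domainE:
  assumes "z \<in> retraction_domain S"
  obtains n c where "n \<in> Nc" "val_coeffs S c" "z = n + lincomb c S"
  using assms unfolding retraction_domain_def by blast

lemma retraction_in_N:
  assumes "S \<subseteq> Mc" "independent_mod S" "z \<in> retraction_domain S"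
  shows "retraction S z \<in> Nc"
  using assms(3) by (rule retraction_domainE) (simp add: retraction_eq[OF assms(1,2)])

lemma retraction_add:
  assumes S: "S \<subseteq> Mc" "independent_mod S"
    and "z \<in> retraction_domain S" "w \<in> retraction_domain S"
  shows "retraction S (z + w) = retraction S z + retraction S w"
proof -
  obtain n c n' c' where n: "n \<in> Nc" "val_coeffs S c" "z = n + lincomb c S"
    and n': "n' \<in> Nc" "val_coeffs S c'" "w = n' + lincomb c' S"
    using assms(3,4) by (elim retraction_domainE)
  have "z + w = (n + n') + lincomb (\<lambda>x. c x + c' x) S"
    using lincomb_add[OF S(1) n(2) n'(2)] n(3) n'(3) by (simp add: algebra_simps)
  moreover have "val_coeffs S (\<lambda>x. c x + c' x)"
    using n(2) n'(2) by (simp add: val_coeffs_def val_ring_add)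
  ultimately have "retraction S (z + w) = n + n'"
    using retraction_eq[OF S N_add[OF n(1) n'(1)]] by simp
  moreover have "retraction S z = n" "retraction S w = n'"
    unfolding n(3) n'(3) using retraction_eq[OF S] n n' by simp_all
  ultimately show ?thesis by simp
qed

lemma retraction_smult:
  assumes S: "S \<subseteq> Mc" "independent_mod S"
    and "r \<in> val_ring v" "z \<in> retraction_domain S"
  shows "retraction S (sm r z) = sm r (retraction S z)"
proof -
  obtain n c where n: "n \<in> Nc" "val_coeffs S c" "z = n + lincomb c S"
    using assms(4) by (elim retraction_domainE)
  have "sm r z = sm r n + lincomb (\<lambda>x. r * c x) S"
    using n N_subset_M smult_add[OF assms(3)] lincomb_in_M[OF S(1) n(2)]
      smult_lincomb[OF S(1) n(2) assms(3)] by auto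
  moreover have "val_coeffs S (\<lambda>x. r * c x)"
    using n(2) assms(3) by (simp add: val_coeffs_def val_ring_mult)
  ultimately have "retraction S (sm r z) = sm r n"
    using retraction_eq[OF S N_smult[OF assms(3) n(1)]] by simp
  moreover have "retraction S z = n" unfolding n(3) using retraction_eq[OF S] n by simp
  ultimately show ?thesis by simp
qed

lemma spans_mod_subset_retraction_domain: "spans_mod E S \<Longrightarrow> E \<subseteq> retraction_domain S"
  unfolding spans_mod_def retraction_domain_def by blast

theorem tensor_map_injective:
  fixes Lc :: "'l::ab_group_add set"
  shows "tensor_map_injective (val_ring v) Nc Mc sm Lc sl"
  unfolding tensor_map_injective_def tensor_zero_def
proof (intro allI impI)
  fix xs :: "('m \<times> 'l) list"
  assume xs: "set xs \<subseteq> Nc \<times> Lc"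
    and "(\<Sum>p\<leftarrow>xs. delta p) \<in> zspan (tensor_rels (val_ring v) Mc sm Lc sl)"
  then obtain E where "finite E" "E \<subseteq> Mc"
    and rel: "(\<Sum>p\<leftarrow>xs. delta p) \<in> zspan (tensor_rels (val_ring v) E sm Lc sl)"
    by (metis zspan_tensor_rels_finite_carrier)
  obtain S where "spans_mod E S" "independent_mod S"
    using \<open>finite E\<close> \<open>E \<subseteq> Mc\<close> by (rule exists_independent_spanning)
  then have S: "S \<subseteq> Mc" "independent_mod S" and E: "E \<subseteq> retraction_domain S"
    by (simp_all add: spans_mod_def spans_mod_subset_retraction_domain)
  have "push_fst (retraction S) (\<Sum>p\<leftarrow>xs. delta p) \<in> zspan (tensor_rels (val_ring v) Nc sm Lc sl)"
  proof (rule push_fst_zspan_tensor_rels[OF _ _ _ rel])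
    show "retraction S (x + y) = retraction S x + retraction S y" if "x \<in> E" "y \<in> E" for x y
      using E that by (intro retraction_add[OF S]) auto
    show "retraction S (sm r x) = sm r (retraction S x)" if "r \<in> val_ring v" "x \<in> E" for r x
      using E that by (intro retraction_smult[OF S]) auto
    show "retraction S x \<in> Nc" if "x \<in> E" for x
      using E that by (intro retraction_in_N[OF S]) auto
  qed
  moreover have "retraction S (fst p) = fst p" if "p \<in> set xs" for p
    using xs that by (intro retraction_of_N[OF S]) auto
  then have "push_fst (retraction S) (\<Sum>p\<leftarrow>xs. delta p) = (\<Sum>p\<leftarrow>xs. delta p)"
    unfolding push_fst_sum_list_delta by (intro arg_cong[where f = sum_list] map_cong) simp_all
  ultimately show "(\<Sum>p\<leftarrow>xs. delta p) \<in> zspan (tensor_rels (val_ring v) Nc sm Lc sl)" by simp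
qed

end

section \<open>Direct products\<close>

lemma fam_prod_mono: "A \<subseteq> B \<Longrightarrow> fam_prod I A \<subseteq> fam_prod I B"
  by (auto simp: fam_prod_def)

lemma module_on_fam_prod:
  assumes "module_on R A fls_smult"
  shows "module_on R (fam_prod I A) fam_smult"
  using assms unfolding module_on_def fam_prod_def fam_smult_def fls_smult_def
  by (simp add: fun_eq_iff distrib_left distrib_right flip: fls_plus_const mult.assoc)

lemma (in valued_field) fam_prod_RX_saturated:
  assumes "r \<in> val_ring v" "r \<noteq> 0" "x \<in> fam_prod I (T_set v)" "fam_smult r x \<in> fam_prod I (RX_set v)"
  shows "x \<in> fam_prod I (RX_set v)"
  using assms RX_saturated_in_T by (auto simp: fam_prod_def fam_smult_def)

theorem proposition4p2:
  fixes v :: "'a::field \<Rightarrow> ereal" and I :: "'i set"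
  assumes "valuation v"
    and "value_group v \<noteq> UNIV"
    and "dense_in_reals (value_group v)"
  shows "submodule_on (val_ring v) (RX_set v) (T_set v) fls_smult \<and>
         (\<forall>(Lc :: 'l::ab_group_add set) sl. module_on (val_ring v) Lc sl \<longrightarrow>
            tensor_map_injective (val_ring v) (RX_set v) (T_set v) fls_smult Lc sl) \<and>
         submodule_on (val_ring v) (fam_prod I (RX_set v)) (fam_prod I (T_set v)) fam_smult \<and>
         (\<forall>(Lc :: 'l::ab_group_add set) sl. module_on (val_ring v) Lc sl \<longrightarrow>
            tensor_map_injective (val_ring v) (fam_prod I (RX_set v)) (fam_prod I (T_set v)) fam_smult Lc sl)"
proof -
  interpret valued_field v by (rule valued_field.intro) (rule assms(1))
  interpret series: torsion_free_quotient v "T_set v" fls_smult "RX_set v"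
    using module_on_T module_on_RX RX_subset_T RX_saturated_in_T
    by unfold_locales (simp_all add: fls_smult_def)
  interpret families: torsion_free_quotient v "fam_prod I (T_set v)" fam_smult "fam_prod I (RX_set v)"
    using module_on_fam_prod[OF module_on_T] module_on_fam_prod[OF module_on_RX]
      fam_prod_mono[OF RX_subset_T] fam_prod_RX_saturated
    by unfold_locales
  show ?thesis
    using series.tensor_map_injective families.tensor_map_injective
      series.N_subset_M series.module_M series.module_N
      families.N_subset_M families.module_M families.module_N
    unfolding submodule_on_def by blast
qed

end
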